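(* Assume (S1) and let $\beta$ be given by (K1) or (K2). For any $J\in\mathbb Z^+$, any $\Delta t>0$, any $N$ (with $N\Delta t=T\le\infty$) and any given $\vec U^0,\vec U^1\in\mathbb R^{J-1}$, the fully discrete scheme (FD) has a solution $\vec U^2,\vec U^3,\dots,\vec U^N$, i.e. at each level $n\ge2$, given $\vec U^0,\dots,\vec U^{n-1}$, the (nonlinear) equation (FD) for $\vec U^n$ has at least one solution in $\mathbb R^{J-1}$.
   Context: Kernels: (K1) $\beta(t)=e^{-\sigma t}t^{\alpha-1}\cos(\gamma t)/\Gamma(\alpha)$ with $\sigma>1$, $0\le\gamma\le\sigma$, $\alpha\in\{1/2,1\}$; (K2) $\beta(t)=e^{-\sigma t}t^{\alpha-1}/\Gamma(\alpha)$ with $\sigma>1$, $0<\alpha\le1$. $K(t)=\int_t^\infty\beta(s)ds$, $K_0=K(0)<1$, $\mu_0=1-K_0$. Assumption (S1): $G:[0,\infty)\to(0,\infty)$ is continuous with $G(v)\ge g_0>0$ for all $v\ge0$, and $G$ is bounded on bounded sets. Grid: $h=1/J$, $x_j=jh$. For $\vec W=(W_1,\dots,W_{J-1})^\top$ extended by $W_0=W_J=0$, $W_{-1}=-W_1$, $W_{J+1}=-W_{J-1}$: $(W_j)_{x\bar x}=(W_{j+1}-2W_j+W_{j-1})/h^2$, $(W_j)_{xx\bar x\bar x}=(W_{j+2}-4W_{j+1}+6W_j-4W_{j-1}+W_{j-2})/h^4$. $\langle\vec V,\vec W\rangle=h\sum_{j=1}^{J-1}V_jW_j$, $\|\vec W\|=\langle\vec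 W,\vec W\rangle^{1/2}$. Time grid: $t_n=n\Delta t$, $\delta_t U^n=(U^n-U^{n-1})/\Delta t$, $\delta_t^2U^n=\delta_t(\delta_tU^n)$. Weights $w_{np}=\frac1{\Delta t}\int_{t_{n-1}}^{t_n}\int_{t_{p-1}}^{\min(t,t_p)}K(t-s)\,ds\,dt>0$, $1\le p\le n$. Fully discrete scheme (FD): for $n\ge2$, $j=1,\dots,J-1$: $\delta_t^2U_j^n+G(\|\vec U^n_{x\bar x}\|^2)\delta_tU_j^n+\mu_0(U_j^n)_{xx\bar x\bar x}+\sum_{p=1}^n w_{np}(\delta_tU_j^p)_{xx\bar x\bar x}=f(x_j,t_n)-K(t_n)(U_j^0)_{xx\bar x\bar x}$, with boundary conventions $U_0^n=U_J^n=0$, $U_{-1}^n=-U_1^n$, $U_{J+1}^n=-U_{J-1}^n$. *)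

theory Defs
  imports "HOL-Analysis.Analysis"
begin

text \<open>Grid vectors \<open>W = (W_1,...,W_{J-1})\<close> are represented as functions \<open>nat \<Rightarrow> real\<close>;
only the values at indices \<open>1..J-1\<close> are used.  \<open>gext J W j\<close> is the extension to
integer indices \<open>j \<in> {-1..J+1}\<close> with \<open>W_0 = W_J = 0\<close>, \<open>W_{-1} = -W_1\<close>,
\<open>W_{J+1} = -W_{J-1}\<close>.\<close>

definition gext :: "nat \<Rightarrow> (nat \<Rightarrow> real) \<Rightarrow> int \<Rightarrow> real" where
  "gext J W j =
     (if j = -1 then - W 1
      else if j = int J + 1 then - W (J - 1)
      else if 1 \<le> j \<and> j \<le> int J - 1 then W (nat j)
      else 0)"

definition meshh :: "nat \<Rightarrow> real" where
  "meshh J = 1 / real J"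

definition dxx :: "nat \<Rightarrow> (nat \<Rightarrow> real) \<Rightarrow> nat \<Rightarrow> real" where
  "dxx J W j = (gext J W (int j + 1) - 2 * gext J W (int j) + gext J W (int j - 1)) / (meshh J)^2"

definition dxxxx :: "nat \<Rightarrow> (nat \<Rightarrow> real) \<Rightarrow> nat \<Rightarrow> real" where
  "dxxxx J W j = (gext J W (int j + 2) - 4 * gext J W (int j + 1) + 6 * gext J W (int j)
                   - 4 * gext J W (int j - 1) + gext J W (int j - 2)) / (meshh J)^4"

definition dinner :: "nat \<Rightarrow> (nat \<Rightarrow> real) \<Rightarrow> (nat \<Rightarrow> real) \<Rightarrow> real" where
  "dinner J V W = meshh J * (\<Sum>j = 1..J - 1. V j * W j)"

definition dnorm :: "nat \<Rightarrow> (nat \<Rightarrow> real) \<Rightarrow> real" where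
  "dnorm J W = sqrt (dinner J W W)"

definition Kker :: "(real \<Rightarrow> real) \<Rightarrow> real \<Rightarrow> real" where
  "Kker \<beta> t = (LBINT s:{t..}. \<beta> s)"

definition kernel_K1 :: "(real \<Rightarrow> real) \<Rightarrow> bool" where
  "kernel_K1 \<beta> \<longleftrightarrow> (\<exists>\<sigma> \<gamma> \<alpha>. \<sigma> > 1 \<and> 0 \<le> \<gamma> \<and> \<gamma> \<le> \<sigma> \<and> \<alpha> \<in> {1/2, 1} \<and>
      \<beta> = (\<lambda>t. exp (- \<sigma> * t) * t powr (\<alpha> - 1) * cos (\<gamma> * t) / Gamma \<alpha>))"

definition kernel_K2 :: "(real \<Rightarrow> real) \<Rightarrow> bool" where
  "kernel_K2 \<beta> \<longleftrightarrow> (\<exists>\<sigma> \<alpha>. \<sigma> > 1 \<and> 0 < \<alpha> \<and> \<alpha> \<le> 1 \<and>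
      \<beta> = (\<lambda>t. exp (- \<sigma> * t) * t powr (\<alpha> - 1) / Gamma \<alpha>))"

definition assm_S1 :: "(real \<Rightarrow> real) \<Rightarrow> bool" where
  "assm_S1 G \<longleftrightarrow> continuous_on {0..} G \<and> (\<forall>v\<ge>0. G v > 0) \<and>
     (\<exists>g0 > 0. \<forall>v\<ge>0. G v \<ge> g0) \<and>
     (\<forall>B. \<exists>M. \<forall>v \<in> {0..B}. \<bar>G v\<bar> \<le> M)"

definition wts :: "(real \<Rightarrow> real) \<Rightarrow> real \<Rightarrow> nat \<Rightarrow> nat \<Rightarrow> real" where
  "wts \<beta> dt n p = (1 / dt) *
     (LBINT t = real (n - 1) * dt .. real n * dt.
        (LBINT s = real (p - 1) * dt .. min t (real p * dt). Kker \<beta> (t - s)))"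

definition dtU :: "real \<Rightarrow> (nat \<Rightarrow> nat \<Rightarrow> real) \<Rightarrow> nat \<Rightarrow> nat \<Rightarrow> real" where
  "dtU dt U n = (\<lambda>j. (U n j - U (n - 1) j) / dt)"

definition FD_level :: "(real \<Rightarrow> real) \<Rightarrow> (real \<Rightarrow> real) \<Rightarrow> (real \<Rightarrow> real \<Rightarrow> real) \<Rightarrow>
    nat \<Rightarrow> real \<Rightarrow> (nat \<Rightarrow> nat \<Rightarrow> real) \<Rightarrow> nat \<Rightarrow> bool" where
  "FD_level G \<beta> f J dt U n \<longleftrightarrow>
     (\<forall>j \<in> {1..J - 1}.
        (dtU dt U n j - dtU dt U (n - 1) j) / dt
        + G ((dnorm J (dxx J (U n)))^2) * dtU dt U n j
        + (1 - Kker \<beta> 0) * dxxxx J (U n) j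
        + (\<Sum>p = 1..n. wts \<beta> dt n p * dxxxx J (dtU dt U p) j)
        = f (real j * meshh J) (real n * dt) - Kker \<beta> (real n * dt) * dxxxx J (U 0) j)"

end

theory Submission
  imports Defs
begin

(* Each time level of (FD) is a nonlinear system
     (1/dt^2 + G(h |D V|^2)/dt) V + c D^2 V = R + G(h |D V|^2)/dt U^(n-1)
   for the new level V, where D is the symmetric second-difference matrix and
   c = mu_0 + w_nn/dt.  Since the kernel is dominated by a Gamma probability density,
   K(r) >= K(0) - 1 and hence c >= 0, so D^2 enters only as a positive semidefinite term.
   Freezing the scalar s = |D V|^2 leaves a coercive linear system, solvable by Gaussian
   elimination, whose solution is bounded and Lipschitz in the frozen coefficient; the
   intermediate value theorem then produces a consistent s.  The levels U^2, U^3, ... are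
   chosen one after another, since (FD) at level n only involves U^0, ..., U^n. *)

section \<open>Kernel estimates\<close>

lemma has_bochner_integral_Gamma_density:
  fixes a :: real
  assumes "a > 0"
  shows "has_bochner_integral lborel (\<lambda>t. indicator {0..} t * t powr (a - 1) / exp t) (Gamma a)"
proof (rule has_bochner_integral_nn_integral)
  show "(\<lambda>t. indicator {0..} t * t powr (a - 1) / exp t) \<in> borel_measurable lborel"
    by measurable
  show "AE x in lborel. 0 \<le> indicator {0..} x * x powr (a - 1) / exp x"
    by (auto simp: indicator_def)
  show "0 \<le> Gamma a"
    using Gamma_real_pos[OF assms] by simp
  show "(\<integral>\<^sup>+x. ennreal (indicator {0..} x * x powr (a - 1) / exp x) \<partial>lborel) = ennreal (Gamma a)"
    using Gamma_conv_nn_integral_real[OF assms] by simp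
qed

lemma abs_exp_powr_div_Gamma_le:
  fixes \<sigma> s c a :: real
  assumes "\<sigma> \<ge> 1" "s \<ge> 0" "\<bar>c\<bar> \<le> 1" "a > 0"
  shows "\<bar>exp (- \<sigma> * s) * s powr (a - 1) * c / Gamma a\<bar> \<le> s powr (a - 1) / exp s / Gamma a"
proof -
  have Gamma_pos: "Gamma a > 0"
    using Gamma_real_pos[OF assms(4)] .
  have exp_le: "exp (- \<sigma> * s) \<le> exp (- s)"
    using mult_right_mono[OF assms(1) assms(2)] by simp
  have "\<bar>exp (- \<sigma> * s) * s powr (a - 1) * c / Gamma a\<bar>
      = exp (- \<sigma> * s) * s powr (a - 1) * \<bar>c\<bar> / Gamma a"
    using Gamma_pos by (simp add: abs_mult)
  also have "\<dots> \<le> exp (- s) * s powr (a - 1) * 1 / Gamma a"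
    using Gamma_pos exp_le assms(3) by (intro divide_right_mono mult_mono) auto
  also have "\<dots> = s powr (a - 1) / exp s / Gamma a"
    by (simp add: exp_minus field_simps)
  finally show ?thesis .
qed

lemma kernel_le_Gamma_density:
  assumes "kernel_K1 \<beta> \<or> kernel_K2 \<beta>"
  obtains a where "a > 0" "\<beta> \<in> borel_measurable borel"
    "\<And>s. s \<ge> 0 \<Longrightarrow> \<bar>\<beta> s\<bar> \<le> s powr (a - 1) / exp s / Gamma a"
  using assms
proof
  assume "kernel_K1 \<beta>"
  then obtain \<sigma> \<gamma> a where "\<sigma> > 1" "a \<in> {1/2, 1}"
    and \<beta>: "\<beta> = (\<lambda>t. exp (- \<sigma> * t) * t powr (a - 1) * cos (\<gamma> * t) / Gamma a)"
    unfolding kernel_K1_def by blast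
  moreover have "\<beta> \<in> borel_measurable borel"
    unfolding \<beta> by measurable
  ultimately show thesis
    using that[of a] abs_exp_powr_div_Gamma_le[of \<sigma> _ "cos (\<gamma> * _)" a] by auto
next
  assume "kernel_K2 \<beta>"
  then obtain \<sigma> a where "\<sigma> > 1" "0 < a"
    and \<beta>: "\<beta> = (\<lambda>t. exp (- \<sigma> * t) * t powr (a - 1) / Gamma a)"
    unfolding kernel_K2_def by blast
  moreover have "\<beta> \<in> borel_measurable borel"
    unfolding \<beta> by measurable
  ultimately show thesis
    using that[of a] abs_exp_powr_div_Gamma_le[of \<sigma> _ 1 a] by auto
qed

text \<open>The kernel is dominated by a Gamma probability density, so its integral over \<open>[0, r)\<close>
  is at most \<open>1\<close>.\<close>
lemma Kker_ge_Kker_0_minus_1: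
  assumes "kernel_K1 \<beta> \<or> kernel_K2 \<beta>" and r: "r \<ge> 0"
  shows "Kker \<beta> r \<ge> Kker \<beta> 0 - 1"
proof -
  obtain a where a: "a > 0" and meas: "\<beta> \<in> borel_measurable borel"
    and dom: "\<And>s. s \<ge> 0 \<Longrightarrow> \<bar>\<beta> s\<bar> \<le> s powr (a - 1) / exp s / Gamma a"
    using kernel_le_Gamma_density[OF assms(1)] by blast
  have Gamma_pos: "Gamma a > 0"
    using Gamma_real_pos[OF a] .
  define g where "g = (\<lambda>t::real. indicator {0..} t * t powr (a - 1) / exp t / Gamma a)"
  have "has_bochner_integral lborel g 1"
    using has_bochner_integral_divide_zero[OF has_bochner_integral_Gamma_density[OF a], of "Gamma a"]
      Gamma_pos by (simp add: g_def)
  then have g_int: "integrable lborel g" and g_total: "integral\<^sup>L lborel g = 1"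
    by (simp_all add: has_bochner_integral_iff)
  have g_set_int: "set_integrable lborel A g" if "A \<in> sets lborel" for A
    unfolding set_integrable_def using g_int that by (intro integrable_mult_indicator) auto
  have \<beta>_set_int: "set_integrable lborel A \<beta>" if "A \<in> sets lborel" "A \<subseteq> {0..}" for A
  proof (rule set_integrable_bound[OF g_set_int[OF that(1)]])
    show "set_borel_measurable lborel A \<beta>"
      unfolding set_borel_measurable_def using meas that(1) by measurable
    show "AE x in lborel. x \<in> A \<longrightarrow> norm (\<beta> x) \<le> norm (g x)"
    proof (intro AE_I2 impI)
      fix x assume "x \<in> A"
      then show "norm (\<beta> x) \<le> norm (g x)"
        using that(2) dom[of x] Gamma_pos by (auto simp: g_def)
    qed
  qed
  have "Kker \<beta> 0 = (LINT s:{0..<r}\<union>{r..}|lborel. \<beta> s)"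
    unfolding Kker_def using r by (simp add: ivl_disj_un)
  also have "\<dots> = (LINT s:{0..<r}|lborel. \<beta> s) + Kker \<beta> r"
    unfolding Kker_def using r by (intro set_integral_Un \<beta>_set_int) auto
  also have "(LINT s:{0..<r}|lborel. \<beta> s) \<le> (LINT s:{0..<r}|lborel. g s)"
    using dom by (intro set_integral_mono \<beta>_set_int g_set_int) (auto simp: g_def intro: abs_le_D1)
  also have "\<dots> \<le> integral\<^sup>L lborel g"
    unfolding set_lebesgue_integral_def using Gamma_pos
    by (intro integral_mono g_int integrable_mult_indicator) (auto simp: g_def indicator_def)
  finally show ?thesis
    using g_total by simp
qed

text \<open>The hypothesis \<open>m \<le> 0\<close> covers a non-integrable \<open>f\<close>, whose integral is \<open>0\<close>
  by convention.\<close>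
lemma interval_integral_ge_const:
  fixes f :: "real \<Rightarrow> real"
  assumes ab: "a \<le> b" and m: "m \<le> 0" and f: "\<And>x. a < x \<Longrightarrow> x < b \<Longrightarrow> m \<le> f x"
  shows "m * (b - a) \<le> (LBINT x=a..b. f x)"
proof -
  have eq: "(LBINT x=a..b. f x) = (LINT x:{a<..<b}|lborel. f x)"
    using ab by (simp add: interval_lebesgue_integral_def)
  show ?thesis
  proof (cases "set_integrable lborel {a<..<b} f")
    case True
    have "set_integrable lborel {a<..<b} (\<lambda>_. m)"
      unfolding set_integrable_def using ab by (simp add: integrable_real_indicator)
    then have "(LINT x:{a<..<b}|lborel. m) \<le> (LINT x:{a<..<b}|lborel. f x)"
      using f by (intro set_integral_mono True) auto
    then show ?thesis
      using eq ab by (simp add: set_integral_const mult.commute)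
  next
    case False
    then have "(LINT x:{a<..<b}|lborel. f x) = 0"
      unfolding set_lebesgue_integral_def set_integrable_def by (rule not_integrable_integral_eq)
    then show ?thesis
      using eq m ab by (simp add: mult_nonpos_nonneg)
  qed
qed

lemma wts_diag_ge:
  assumes kernel: "kernel_K1 \<beta> \<or> kernel_K2 \<beta>" and K0: "Kker \<beta> 0 < 1"
    and dt: "dt > 0" and n: "n \<ge> 1"
  shows "wts \<beta> dt n n \<ge> (Kker \<beta> 0 - 1) * dt"
proof -
  define m where "m = Kker \<beta> 0 - 1"
  have m: "m \<le> 0"
    using K0 by (simp add: m_def)
  define a where "a = real (n - 1) * dt"
  define b where "b = real n * dt"
  have ba: "b - a = dt"
    using n by (simp add: a_def b_def of_nat_diff algebra_simps)
  have inner: "m * dt \<le> (LBINT s = a..min t b. Kker \<beta> (t - s))" if t: "a < t" "t < b" for t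
  proof -
    have "m * dt \<le> m * (t - a)"
      using t ba m by (intro mult_left_mono_neg) auto
    also have "\<dots> \<le> (LBINT s = a..t. Kker \<beta> (t - s))"
      using t m Kker_ge_Kker_0_minus_1[OF kernel]
      by (intro interval_integral_ge_const) (auto simp: m_def)
    finally show ?thesis
      using t by (simp add: min_def)
  qed
  have "m * dt * (b - a) \<le> (LBINT t = a..b. (LBINT s = a..min t b. Kker \<beta> (t - s)))"
    using ba dt m inner by (intro interval_integral_ge_const) (auto simp: mult_nonpos_nonneg)
  then have "m * dt * dt \<le> dt * wts \<beta> dt n n"
    using ba dt by (simp add: wts_def a_def b_def)
  then show ?thesis
    using dt by (simp add: m_def)
qed


section \<open>Linear systems with a positive semidefinite part\<close>

definition qform :: "'a set \<Rightarrow> ('a \<Rightarrow> 'a \<Rightarrow> real) \<Rightarrow> ('a \<Rightarrow> real) \<Rightarrow> real" where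
  "qform I M x = (\<Sum>i\<in>I. \<Sum>j\<in>I. x i * M i j * x j)"

lemma qform_eq_sum_row:
  "qform I M x = (\<Sum>i\<in>I. x i * (\<Sum>j\<in>I. M i j * x j))"
  by (simp add: qform_def sum_distrib_left mult.assoc)

lemma coercive_diag_ge:
  assumes "finite I" "k \<in> I" "\<forall>x. qform I M x \<ge> \<alpha> * (\<Sum>i\<in>I. (x i)^2)"
  shows "M k k \<ge> \<alpha>"
proof -
  define e where "e = (\<lambda>j. if j = k then 1 else 0 :: real)"
  have "qform I M e = M k k" "(\<Sum>i\<in>I. (e i)^2) = 1"
    using assms(1,2) by (simp_all add: qform_def e_def mult_delta_right mult_delta_left sum.delta
        if_distrib[of "\<lambda>x. x\<^sup>2"] cong: if_cong)
  then show ?thesis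
    using assms(3)[rule_format, of e] by simp
qed

text \<open>Coercivity passes to the Schur complement: extend \<open>x\<close> at \<open>k\<close> by the value \<open>t\<close>
  minimising the quadratic form.\<close>
lemma coercive_Schur_complement:
  assumes fin: "finite I" and k: "k \<notin> I" and "\<alpha> > 0"
    and coercive: "\<forall>x. qform (insert k I) M x \<ge> \<alpha> * (\<Sum>i\<in>insert k I. (x i)^2)"
  shows "\<forall>x. qform I (\<lambda>i j. M i j - M i k * M k j / M k k) x \<ge> \<alpha> * (\<Sum>i\<in>I. (x i)^2)"
proof
  fix x :: "'a \<Rightarrow> real"
  define d where "d = M k k"
  have "d \<ge> \<alpha>"
    unfolding d_def by (rule coercive_diag_ge[OF _ _ coercive]) (use fin in auto)
  then have d: "d > 0"
    using \<open>\<alpha> > 0\<close> by simp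
  define q where "q = (\<Sum>j\<in>I. M k j * x j)"
  define p where "p = (\<Sum>i\<in>I. x i * M i k)"
  define t where "t = - q / d"
  define y where "y = x(k := t)"
  have y_I: "\<And>j. j \<in> I \<Longrightarrow> y j = x j" and y_k: "y k = t"
    using k by (auto simp: y_def)
  have "qform (insert k I) M y = t * d * t + t * q + p * t + qform I M x"
    using fin k y_I y_k
    by (simp add: qform_def sum.distrib sum_distrib_left sum_distrib_right d_def q_def p_def
        algebra_simps)
  also have "t * d * t + t * q + p * t = - p * q / d"
    using d by (simp add: t_def field_simps power2_eq_square)
  also have "qform I M x = qform I (\<lambda>i j. M i j - M i k * M k j / d) x + p * q / d"
  proof -
    have "qform I (\<lambda>i j. M i j - M i k * M k j / d) x
        = (\<Sum>i\<in>I. \<Sum>j\<in>I. x i * M i j * x j - (x i * M i k) * (M k j * x j) / d)"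
      by (simp add: qform_def algebra_simps)
    also have "\<dots> = qform I M x - (\<Sum>i\<in>I. (x i * M i k) * q / d)"
      by (simp add: qform_def sum_subtractf q_def sum_divide_distrib[symmetric] sum_distrib_left)
    also have "\<dots> = qform I M x - p * q / d"
      by (simp add: p_def sum_divide_distrib[symmetric] sum_distrib_right)
    finally show ?thesis
      by simp
  qed
  finally have "qform (insert k I) M y = qform I (\<lambda>i j. M i j - M i k * M k j / d) x"
    by simp
  moreover have "(\<Sum>i\<in>insert k I. (y i)^2) \<ge> (\<Sum>i\<in>I. (x i)^2)"
    using fin k y_I by simp
  ultimately show "qform I (\<lambda>i j. M i j - M i k * M k j / M k k) x \<ge> \<alpha> * (\<Sum>i\<in>I. (x i)^2)"
    using coercive[rule_format, of y] \<open>\<alpha> > 0\<close> unfolding d_def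
    by (smt (verit) mult_left_mono)
qed

text \<open>Gaussian elimination; the pivots are positive by coercivity.\<close>
lemma coercive_system_solvable:
  assumes "finite I" "\<alpha> > 0" "\<forall>x. qform I M x \<ge> \<alpha> * (\<Sum>i\<in>I. (x i)^2)"
  shows "\<exists>x. \<forall>i\<in>I. (\<Sum>j\<in>I. M i j * x j) = b i"
  using assms
proof (induction I arbitrary: M b rule: finite_induct)
  case empty
  then show ?case by simp
next
  case (insert k I)
  define d where "d = M k k"
  have "d \<ge> \<alpha>"
    unfolding d_def by (rule coercive_diag_ge[OF _ _ insert.prems(2)]) (use insert.hyps in auto)
  then have d: "d > 0"
    using insert.prems(1) by simp
  obtain x where x: "\<forall>i\<in>I. (\<Sum>j\<in>I. (M i j - M i k * M k j / d) * x j) = b i - M i k * b k / d"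
    using insert.IH[OF insert.prems(1) coercive_Schur_complement[OF insert.hyps insert.prems],
        where b = "\<lambda>i. b i - M i k * b k / M k k"]
    unfolding d_def by blast
  define q where "q = (\<Sum>j\<in>I. M k j * x j)"
  define y where "y = x(k := (b k - q) / d)"
  have row: "(\<Sum>j\<in>insert k I. M i j * y j) = M i k * ((b k - q) / d) + (\<Sum>j\<in>I. M i j * x j)" for i
    using insert.hyps by (auto simp: y_def intro!: sum.cong)
  have "(\<Sum>j\<in>insert k I. M i j * y j) = b i" if i: "i \<in> insert k I" for i
  proof (cases "i = k")
    case True
    have "M k k * ((b k - q) / d) = b k - q"
      using d by (simp add: d_def)
    then show ?thesis
      using row[of k] True by (simp add: q_def)
  next
    case False
    then have "(\<Sum>j\<in>I. M i j * x j) - M i k * q / d = b i - M i k * b k / d"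
      using x i by (simp add: algebra_simps sum_subtractf q_def sum_distrib_left
          sum_divide_distrib[symmetric])
    then have "(\<Sum>j\<in>I. M i j * x j) = b i - M i k * b k / d + M i k * q / d"
      by simp
    then show ?thesis
      unfolding row by (simp add: right_diff_distrib diff_divide_distrib)
  qed
  then show ?case by blast
qed

lemma sum_mult_le_Young:
  fixes z r :: "'a \<Rightarrow> real"
  assumes "a > 0"
  shows "(\<Sum>i\<in>I. z i * r i) \<le> a / 2 * (\<Sum>i\<in>I. (z i)^2) + (\<Sum>i\<in>I. (r i)^2) / (2 * a)"
proof -
  have "z i * r i \<le> a / 2 * (z i)^2 + (r i)^2 / (2 * a)" for i
  proof -
    have "0 \<le> (a * z i - r i)^2"
      by simp
    then have "2 * a * (z i * r i) \<le> a * (a * (z i)^2) + (r i)^2"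
      by (simp add: power2_eq_square algebra_simps)
    then show ?thesis
      using assms by (simp add: field_simps power2_eq_square)
  qed
  then have "(\<Sum>i\<in>I. z i * r i) \<le> (\<Sum>i\<in>I. a / 2 * (z i)^2 + (r i)^2 / (2 * a))"
    by (rule sum_mono)
  then show ?thesis
    by (simp add: sum.distrib sum_distrib_left sum_divide_distrib)
qed

lemma sum_mult_shifted_eq_qform:
  "(\<Sum>i\<in>I. x i * (e * x i + c * (\<Sum>k\<in>I. A i k * x k))) = e * (\<Sum>i\<in>I. (x i)^2) + c * qform I A x"
  by (simp add: qform_eq_sum_row algebra_simps sum.distrib sum_distrib_left power2_eq_square)

lemma psd_system_solvable:
  assumes "finite I" "e > 0" "c \<ge> 0" "\<forall>x. qform I A x \<ge> 0"
  shows "\<exists>x. \<forall>i\<in>I. e * x i + c * (\<Sum>k\<in>I. A i k * x k) = r i"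
proof -
  define M where "M i j = (if i = j then e else 0) + c * A i j" for i j
  have row: "(\<Sum>j\<in>I. M i j * x j) = e * x i + c * (\<Sum>k\<in>I. A i k * x k)" if "i \<in> I" for i x
  proof -
    have "(\<Sum>j\<in>I. M i j * x j) = (\<Sum>j\<in>I. (if j = i then e * x j else 0) + c * (A i j * x j))"
      by (intro sum.cong) (auto simp: M_def algebra_simps)
    then show ?thesis
      using assms(1) that by (simp add: sum.distrib sum_distrib_left)
  qed
  have "qform I M x \<ge> e * (\<Sum>i\<in>I. (x i)^2)" for x
  proof -
    have "qform I M x = e * (\<Sum>i\<in>I. (x i)^2) + c * qform I A x"
      unfolding qform_eq_sum_row[of I M] sum_mult_shifted_eq_qform[symmetric] using row by simp
    then show ?thesis
      using assms(3,4) by simp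
  qed
  then obtain x where "\<forall>i\<in>I. (\<Sum>j\<in>I. M i j * x j) = r i"
    using coercive_system_solvable[OF assms(1,2)] by blast
  then show ?thesis
    using row by auto
qed

lemma psd_system_energy_le:
  assumes "c \<ge> 0" "\<forall>x. qform I A x \<ge> 0"
    and "\<forall>i\<in>I. e * z i + c * (\<Sum>k\<in>I. A i k * z k) = r i"
  shows "e * (\<Sum>i\<in>I. (z i)^2) \<le> (\<Sum>i\<in>I. z i * r i)"
proof -
  have "(\<Sum>i\<in>I. z i * r i) = e * (\<Sum>i\<in>I. (z i)^2) + c * qform I A z"
    unfolding sum_mult_shifted_eq_qform[symmetric] using assms(3) by simp
  then show ?thesis
    using assms(1,2) by simp
qed

lemma psd_system_sqnorm_le:
  assumes "0 < a" "a \<le> e" "c \<ge> 0" "\<forall>x. qform I A x \<ge> 0"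
    and "\<forall>i\<in>I. e * z i + c * (\<Sum>k\<in>I. A i k * z k) = r i"
  shows "(\<Sum>i\<in>I. (z i)^2) \<le> (\<Sum>i\<in>I. (r i)^2) / a^2"
proof -
  have "a * (\<Sum>i\<in>I. (z i)^2) \<le> e * (\<Sum>i\<in>I. (z i)^2)"
    using assms(2) by (simp add: mult_right_mono sum_nonneg)
  also have "\<dots> \<le> (\<Sum>i\<in>I. z i * r i)"
    using psd_system_energy_le[OF assms(3-5)] .
  also have "\<dots> \<le> a / 2 * (\<Sum>i\<in>I. (z i)^2) + (\<Sum>i\<in>I. (r i)^2) / (2 * a)"
    using sum_mult_le_Young[OF assms(1)] .
  finally show ?thesis
    using assms(1) by (simp add: field_simps power2_eq_square)
qed

lemma psd_system_sqnorm_bound: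
  assumes "a > 0" "g \<ge> 0" "c \<ge> 0" "\<forall>x. qform I A x \<ge> 0"
    and "\<forall>i\<in>I. (a + g) * x i + c * (\<Sum>k\<in>I. A i k * x k) = R i + g * u i"
  shows "(\<Sum>i\<in>I. (x i)^2) \<le> (\<Sum>i\<in>I. (R i)^2) / a^2 + (\<Sum>i\<in>I. (u i)^2)"
proof -
  define N where "N v = (\<Sum>i\<in>I. (v i)^2)" for v :: "'a \<Rightarrow> real"
  have "(a + g) * N x \<le> (\<Sum>i\<in>I. x i * (R i + g * u i))"
    unfolding N_def using psd_system_energy_le[OF assms(3-5)] .
  also have "\<dots> = (\<Sum>i\<in>I. x i * R i) + g * (\<Sum>i\<in>I. x i * u i)"
    by (simp add: algebra_simps sum.distrib sum_distrib_left)
  also have "\<dots> \<le> (a / 2 * N x + N R / (2 * a)) + g * (1 / 2 * N x + N u / (2 * 1))"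
    unfolding N_def by (intro add_mono mult_left_mono sum_mult_le_Young assms(1,2)) auto
  finally have "(a + g) / 2 * N x \<le> N R / (2 * a) + g / 2 * N u"
    by (simp add: algebra_simps)
  also have "\<dots> \<le> (a + g) / 2 * (N R / a^2 + N u)"
  proof -
    have "N R / (2 * a) = a / 2 * (N R / a^2)"
      using assms(1) by (simp add: power2_eq_square)
    moreover have "g / 2 * (N R / a^2) \<ge> 0" "a / 2 * N u \<ge> 0"
      using assms(1,2) by (simp_all add: N_def sum_nonneg)
    ultimately show ?thesis
      by (simp add: algebra_simps add_divide_distrib)
  qed
  finally show ?thesis
    using assms(1,2) by (simp add: N_def)
qed

lemma psd_system_solution_diff_sqnorm_le:
  assumes "a > 0" "g \<ge> 0" "g' \<ge> 0" "c \<ge> 0" and psd: "\<forall>x. qform I A x \<ge> 0"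
    and x: "\<forall>i\<in>I. (a + g) * x i + c * (\<Sum>k\<in>I. A i k * x k) = R i + g * u i"
    and y: "\<forall>i\<in>I. (a + g') * y i + c * (\<Sum>k\<in>I. A i k * y k) = R i + g' * u i"
  shows "(\<Sum>i\<in>I. (x i - y i)^2)
           \<le> (g - g')^2 * (4 * (\<Sum>i\<in>I. (u i)^2) + 2 * (\<Sum>i\<in>I. (R i)^2) / a^2) / a^2"
proof -
  define N where "N v = (\<Sum>i\<in>I. (v i)^2)" for v :: "'a \<Rightarrow> real"
  have "\<forall>i\<in>I. (a + g) * (x i - y i) + c * (\<Sum>k\<in>I. A i k * (x k - y k))
              = (g - g') * (u i - y i)"
    using x y by (simp add: algebra_simps sum_subtractf)
  then have "N (\<lambda>i. x i - y i) \<le> N (\<lambda>i. (g - g') * (u i - y i)) / a^2"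
    unfolding N_def using assms(1,2,4) psd by (intro psd_system_sqnorm_le) auto
  also have "N (\<lambda>i. (g - g') * (u i - y i)) = (g - g')^2 * N (\<lambda>i. u i - y i)"
    by (simp add: N_def power_mult_distrib sum_distrib_left)
  also have "N (\<lambda>i. u i - y i) \<le> 2 * N u + 2 * N y"
  proof -
    have "(u i - y i)^2 \<le> 2 * (u i)^2 + 2 * (y i)^2" for i
      using zero_le_power2[of "u i + y i"] by (simp add: power2_eq_square algebra_simps)
    then have "N (\<lambda>i. u i - y i) \<le> (\<Sum>i\<in>I. 2 * (u i)^2 + 2 * (y i)^2)"
      unfolding N_def by (rule sum_mono)
    then show ?thesis
      by (simp add: N_def sum.distrib sum_distrib_left)
  qed
  also have "N y \<le> N R / a^2 + N u"
    unfolding N_def using psd_system_sqnorm_bound[OF assms(1,3,4) psd y] .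
  finally show ?thesis
    using assms(1) by (simp add: N_def divide_right_mono mult_left_mono)
qed

lemma psd_system_solution_continuous:
  assumes "finite I" "a > 0" "c \<ge> 0" "\<forall>x. qform I A x \<ge> 0"
    and x: "\<And>g. g \<ge> 0 \<Longrightarrow> \<forall>i\<in>I. (a + g) * x g i + c * (\<Sum>k\<in>I. A i k * x g k) = R i + g * u i"
    and k: "k \<in> I"
  shows "continuous_on {0..} (\<lambda>g. x g k)"
proof (rule lipschitz_on_continuous_on)
  define K where "K = (4 * (\<Sum>i\<in>I. (u i)^2) + 2 * (\<Sum>i\<in>I. (R i)^2) / a^2) / a^2"
  have "\<bar>x g k - x g' k\<bar> \<le> sqrt K * \<bar>g - g'\<bar>" if "g \<ge> 0" "g' \<ge> 0" for g g'
  proof -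
    have "(x g k - x g' k)^2 \<le> (\<Sum>i\<in>I. (x g i - x g' i)^2)"
      using assms(1) k by (intro member_le_sum) auto
    also have "\<dots> \<le> (g - g')^2 * K"
      using psd_system_solution_diff_sqnorm_le[OF assms(2) that assms(3,4) x x] that
      by (simp add: K_def)
    finally have "sqrt ((x g k - x g' k)^2) \<le> sqrt ((g - g')^2 * K)"
      by (rule real_sqrt_le_mono)
    then show ?thesis
      by (simp add: real_sqrt_mult mult.commute)
  qed
  moreover have "K \<ge> 0"
    by (simp add: K_def sum_nonneg)
  ultimately show "(sqrt K)-lipschitz_on {0..} (\<lambda>g. x g k)"
    by (intro lipschitz_onI) (auto simp: dist_real_def)
qed

lemma nonlinear_psd_system_solvable:
  fixes A B :: "'a \<Rightarrow> 'a \<Rightarrow> real" and \<Gamma> :: "real \<Rightarrow> real"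
  assumes fin: "finite I" and a: "a > 0" and c: "c \<ge> 0" and psd: "\<forall>x. qform I A x \<ge> 0"
    and \<Gamma>_cont: "continuous_on {0..} \<Gamma>" and \<Gamma>_nonneg: "\<And>s. s \<ge> 0 \<Longrightarrow> \<Gamma> s \<ge> 0"
  shows "\<exists>V. \<forall>i\<in>I. (a + \<Gamma> (\<Sum>j\<in>I. (\<Sum>k\<in>I. B j k * V k)^2)) * V i + c * (\<Sum>k\<in>I. A i k * V k)
                = R i + \<Gamma> (\<Sum>j\<in>I. (\<Sum>k\<in>I. B j k * V k)^2) * u i"
proof -
  define \<Phi> where "\<Phi> V = (\<Sum>j\<in>I. (\<Sum>k\<in>I. B j k * V k)^2)" for V
  define solves where
    "solves g x \<longleftrightarrow> (\<forall>i\<in>I. (a + g) * x i + c * (\<Sum>k\<in>I. A i k * x k) = R i + g * u i)" for g x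
  define sol where "sol g = (SOME x. solves g x)" for g
  have "solves g (sol g)" if "g \<ge> 0" for g
  proof -
    have "\<exists>x. solves g x"
      unfolding solves_def using fin a c psd that by (intro psd_system_solvable) auto
    then show ?thesis
      unfolding sol_def by (rule someI_ex)
  qed
  then have sol: "\<forall>i\<in>I. (a + g) * sol g i + c * (\<Sum>k\<in>I. A i k * sol g k) = R i + g * u i"
    if "g \<ge> 0" for g
    using that unfolding solves_def by blast
  define C where "C = (\<Sum>j\<in>I. \<Sum>k\<in>I. (B j k)^2) * ((\<Sum>i\<in>I. (R i)^2) / a^2 + (\<Sum>i\<in>I. (u i)^2))"
  have \<Phi>_sol_le: "\<Phi> (sol g) \<le> C" if "g \<ge> 0" for g
  proof -
    have "(\<Sum>k\<in>I. B j k * sol g k)^2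
        \<le> (\<Sum>k\<in>I. (B j k)^2) * ((\<Sum>i\<in>I. (R i)^2) / a^2 + (\<Sum>i\<in>I. (u i)^2))" for j
      using Cauchy_Schwarz_ineq_sum[of "B j" "sol g" I]
        psd_system_sqnorm_bound[OF a that c psd sol[OF that]]
      by (meson order_trans mult_left_mono sum_nonneg zero_le_power2)
    then show ?thesis
      unfolding \<Phi>_def C_def sum_distrib_right by (rule sum_mono)
  qed
  have "continuous_on {0..} (\<lambda>s. s - \<Phi> (sol (\<Gamma> s)))"
  proof -
    have "continuous_on {0..} (\<lambda>s. sol (\<Gamma> s) k)" if "k \<in> I" for k
      using \<Gamma>_nonneg
      by (intro continuous_on_compose2[OF psd_system_solution_continuous[OF fin a c psd sol that]
            \<Gamma>_cont]) auto
    then show ?thesis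
      unfolding \<Phi>_def by (intro continuous_intros)
  qed
  moreover have "0 \<le> C"
    using a by (simp add: C_def sum_nonneg)
  moreover have "0 - \<Phi> (sol (\<Gamma> 0)) \<le> 0" "0 \<le> C - \<Phi> (sol (\<Gamma> C))"
    using \<Phi>_sol_le \<Gamma>_nonneg \<open>0 \<le> C\<close> by (simp_all add: \<Phi>_def sum_nonneg)
  ultimately obtain s where "0 \<le> s" "s - \<Phi> (sol (\<Gamma> s)) = 0"
    using IVT'[of "\<lambda>s. s - \<Phi> (sol (\<Gamma> s))" 0 0 C] continuous_on_subset by fastforce
  then have "\<Phi> (sol (\<Gamma> s)) = s"
    by simp
  then show ?thesis
    using sol[OF \<Gamma>_nonneg[OF \<open>0 \<le> s\<close>]] unfolding \<Phi>_def by (intro exI[of _ "sol (\<Gamma> s)"]) simp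
qed


section \<open>Matrices of the difference operators\<close>

definition dxx_mat :: "nat \<Rightarrow> nat \<Rightarrow> nat \<Rightarrow> real" where
  "dxx_mat J j k = (if j = k then -2 else if j = k + 1 \<or> k = j + 1 then 1 else 0) / (meshh J)^2"

definition dxxxx_mat :: "nat \<Rightarrow> nat \<Rightarrow> nat \<Rightarrow> real" where
  "dxxxx_mat J j k = (\<Sum>l\<in>{1..J-1}. dxx_mat J j l * dxx_mat J l k)"

lemma dxx_mat_sym: "dxx_mat J j k = dxx_mat J k j"
  by (auto simp: dxx_mat_def)

lemma sum_dxx_mat:
  assumes j: "j \<in> {1..J-1}"
  shows "(\<Sum>k\<in>{1..J-1}. dxx_mat J j k * w k)
       = (-2 * w j + (if j \<ge> 2 then w (j - 1) else 0) + (if j + 1 \<le> J - 1 then w (j + 1) else 0))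
           / (meshh J)^2"
proof -
  let ?I = "{1..J-1}"
  have "(\<Sum>k\<in>?I. dxx_mat J j k * w k)
      = (\<Sum>k\<in>?I. (-2 * (if k = j then w k else 0) + (if k = j - 1 then w k else 0)
            + (if k = j + 1 then w k else 0)) / (meshh J)^2)"
    using j by (intro sum.cong) (auto simp: dxx_mat_def)
  also have "\<dots> = (-2 * (\<Sum>k\<in>?I. if k = j then w k else 0) + (\<Sum>k\<in>?I. if k = j - 1 then w k else 0)
          + (\<Sum>k\<in>?I. if k = j + 1 then w k else 0)) / (meshh J)^2"
    by (simp only: sum_divide_distrib[symmetric] sum.distrib sum_distrib_left[symmetric])
  also have "\<dots> = (-2 * w j + (if j \<ge> 2 then w (j - 1) else 0)
                   + (if j + 1 \<le> J - 1 then w (j + 1) else 0)) / (meshh J)^2"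
    using j by (auto simp: sum.delta)
  finally show ?thesis .
qed

lemma gext_interior: "j \<in> {1..J-1} \<Longrightarrow> gext J W (int j) = W j"
  by (auto simp: gext_def)

lemma gext_succ:
  "j \<in> {1..J-1} \<Longrightarrow> gext J W (int j + 1) = (if j + 1 \<le> J - 1 then W (j + 1) else 0)"
  by (auto simp: gext_def nat_add_distrib)

lemma gext_pred:
  "j \<in> {1..J-1} \<Longrightarrow> gext J W (int j - 1) = (if j \<ge> 2 then W (j - 1) else 0)"
  by (auto simp: gext_def nat_diff_distrib)

lemma gext_succ2:
  "j \<in> {1..J-1} \<Longrightarrow>
    gext J W (int j + 2) = (if j + 2 \<le> J - 1 then W (j + 2) else if j + 2 = J then 0 else - W j)"
  by (cases "j + 1 = J") (auto simp: gext_def nat_add_distrib)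

lemma gext_pred2:
  "j \<in> {1..J-1} \<Longrightarrow> gext J W (int j - 2) = (if j \<ge> 3 then W (j - 2) else if j = 2 then 0 else - W j)"
  by (cases "j = 1") (auto simp: gext_def nat_diff_distrib)

lemma dxx_eq_sum:
  assumes j: "j \<in> {1..J-1}"
  shows "dxx J V j = (\<Sum>k\<in>{1..J-1}. dxx_mat J j k * V k)"
  unfolding sum_dxx_mat[OF j] dxx_def gext_interior[OF j] gext_succ[OF j] gext_pred[OF j]
  by simp

text \<open>The odd reflections \<open>W\<^sub>-\<^sub>1 = -W\<^sub>1\<close>, \<open>W\<^sub>J\<^sub>+\<^sub>1 = -W\<^sub>J\<^sub>-\<^sub>1\<close> are exactly
  what makes the fourth difference the square of the second difference with zero boundary
  values.\<close>
lemma dxxxx_eq_sum_dxx: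
  assumes j: "j \<in> {1..J-1}"
  shows "dxxxx J V j = (\<Sum>l\<in>{1..J-1}. dxx_mat J j l * dxx J V l)"
proof -
  have h: "meshh J \<noteq> 0"
    using j by (auto simp: meshh_def)
  have left: "dxx J V (j - 1) = (V j - 2 * V (j - 1) + gext J V (int j - 2)) / (meshh J)^2"
    if "j \<ge> 2"
  proof -
    have i: "j - 1 \<in> {1..J-1}"
      using that j by auto
    have shift: "int (j - 1) + 1 = int j" "int (j - 1) - 1 = int j - 2"
      using that by auto
    show ?thesis
      unfolding dxx_def shift gext_interior[OF i] gext_interior[OF j] ..
  qed
  have right: "dxx J V (j + 1) = (gext J V (int j + 2) - 2 * V (j + 1) + V j) / (meshh J)^2"
    if "j + 1 \<le> J - 1"
  proof -
    have i: "j + 1 \<in> {1..J-1}"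
      using that j by auto
    have shift: "int (j + 1) + 1 = int j + 2" "int (j + 1) - 1 = int j"
      by auto
    show ?thesis
      unfolding dxx_def shift gext_interior[OF i] gext_interior[OF j] ..
  qed
  have centre: "dxx J V j = (gext J V (int j + 1) - 2 * V j + gext J V (int j - 1)) / (meshh J)^2"
    unfolding dxx_def gext_interior[OF j] ..
  show ?thesis
    unfolding sum_dxx_mat[OF j] dxxxx_def centre gext_interior[OF j] gext_succ[OF j] gext_pred[OF j]
      gext_succ2[OF j] gext_pred2[OF j]
    using j left right h by (auto simp: gext_succ2[OF j] gext_pred2[OF j] field_simps)
qed

lemma dxxxx_eq_sum:
  assumes j: "j \<in> {1..J-1}"
  shows "dxxxx J V j = (\<Sum>k\<in>{1..J-1}. dxxxx_mat J j k * V k)"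
proof -
  have "dxxxx J V j = (\<Sum>l\<in>{1..J-1}. dxx_mat J j l * (\<Sum>k\<in>{1..J-1}. dxx_mat J l k * V k))"
    unfolding dxxxx_eq_sum_dxx[OF j] by (intro sum.cong refl) (simp add: dxx_eq_sum)
  also have "\<dots> = (\<Sum>k\<in>{1..J-1}. dxxxx_mat J j k * V k)"
    unfolding dxxxx_mat_def by (simp add: sum_distrib_left sum_distrib_right mult.assoc) (rule sum.swap)
  finally show ?thesis .
qed

text \<open>Since \<open>dxx_mat\<close> is symmetric, the quadratic form of \<open>dxxxx_mat = dxx_mat\<^sup>2\<close> is a
  sum of squares.\<close>
lemma qform_dxxxx_mat_nonneg: "qform {1..J-1} (dxxxx_mat J) x \<ge> 0"
proof -
  let ?I = "{1..J-1}"
  have "qform ?I (dxxxx_mat J) x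
      = (\<Sum>i\<in>?I. \<Sum>j\<in>?I. \<Sum>l\<in>?I. (dxx_mat J l i * x i) * (dxx_mat J l j * x j))"
    unfolding qform_def dxxxx_mat_def sum_distrib_left sum_distrib_right
    by (intro sum.cong refl) (simp add: dxx_mat_sym[of J _ l for l])
  also have "\<dots> = (\<Sum>l\<in>?I. \<Sum>i\<in>?I. \<Sum>j\<in>?I. (dxx_mat J l i * x i) * (dxx_mat J l j * x j))"
    by (subst sum.swap) (intro sum.cong refl sum.swap)
  also have "\<dots> = (\<Sum>l\<in>?I. (\<Sum>i\<in>?I. dxx_mat J l i * x i) * (\<Sum>j\<in>?I. dxx_mat J l j * x j))"
    by (simp add: sum_product)
  finally show ?thesis
    by (simp add: sum_nonneg)
qed

lemma dnorm_dxx_sq: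
  "(dnorm J (dxx J V))^2 = meshh J * (\<Sum>j\<in>{1..J-1}. (\<Sum>k\<in>{1..J-1}. dxx_mat J j k * V k)^2)"
proof -
  have "dinner J (dxx J V) (dxx J V) \<ge> 0"
    unfolding dinner_def by (simp add: meshh_def sum_nonneg)
  then show ?thesis
    by (simp add: dnorm_def dinner_def dxx_eq_sum power2_eq_square)
qed


section \<open>Solvability of the scheme\<close>

lemma sum_wts_dtU_update:
  assumes "n \<ge> 1"
  shows "(\<Sum>p = 1..n. wts \<beta> dt n p * dxxxx J (dtU dt (U(n := V)) p) j)
       = (\<Sum>p = 1..n - 1. wts \<beta> dt n p * dxxxx J (dtU dt U p) j)
         + wts \<beta> dt n n * dxxxx J (\<lambda>i. (V i - U (n - 1) i) / dt) j"
proof -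
  obtain m where m: "n = Suc m"
    using assms by (cases n) auto
  have "dtU dt (U(n := V)) p = dtU dt U p" if "p \<in> {1..m}" for p
    using that m by (auto simp: dtU_def)
  then show ?thesis
    using m by (simp add: dtU_def)
qed

definition FD_known :: "(real \<Rightarrow> real) \<Rightarrow> (real \<Rightarrow> real \<Rightarrow> real) \<Rightarrow> nat \<Rightarrow> real \<Rightarrow>
    (nat \<Rightarrow> nat \<Rightarrow> real) \<Rightarrow> nat \<Rightarrow> nat \<Rightarrow> real" where
  "FD_known \<beta> f J dt U n j =
     f (real j * meshh J) (real n * dt) - Kker \<beta> (real n * dt) * dxxxx J (U 0) j
     - (\<Sum>p = 1..n - 1. wts \<beta> dt n p * dxxxx J (dtU dt U p) j)
     + (2 * U (n - 1) j - U (n - 2) j) / dt^2 + wts \<beta> dt n n / dt * dxxxx J (U (n - 1)) j"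

lemma FD_level_updateI:
  assumes dt: "dt > 0" and n: "n \<ge> 2"
    and V: "\<And>j. j \<in> {1..J-1} \<Longrightarrow>
      (1 / dt^2 + G ((dnorm J (dxx J V))^2) / dt) * V j
        + (1 - Kker \<beta> 0 + wts \<beta> dt n n / dt) * dxxxx J V j
      = FD_known \<beta> f J dt U n j + G ((dnorm J (dxx J V))^2) / dt * U (n - 1) j"
  shows "FD_level G \<beta> f J dt (U(n := V)) n"
proof -
  define g where "g = G ((dnorm J (dxx J V))^2) / dt"
  define u where "u = U (n - 1)"
  define w where "w = wts \<beta> dt n n"
  define \<mu> where "\<mu> = 1 - Kker \<beta> 0"
  have balance: "((x - y) / dt - (y - z) / dt) / dt + dt * g * ((x - y) / dt) + \<mu> * a
      + (s + w * ((a - b) / dt)) = r"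
    if "(1 / dt^2 + g) * x + (\<mu> + w / dt) * a = r - s + (2 * y - z) / dt^2 + w / dt * b + g * y"
    for x y z a b s r
    using that dt by (simp add: field_simps power2_eq_square)
  have "((V j - u j) / dt - (u j - U (n - 2) j) / dt) / dt + dt * g * ((V j - u j) / dt)
      + \<mu> * dxxxx J V j + ((\<Sum>p = 1..n - 1. wts \<beta> dt n p * dxxxx J (dtU dt U p) j)
      + w * ((dxxxx J V j - dxxxx J u j) / dt))
      = f (real j * meshh J) (real n * dt) - Kker \<beta> (real n * dt) * dxxxx J (U 0) j"
    if "j \<in> {1..J-1}" for j
    by (rule balance) (use V[OF that] in \<open>simp add: FD_known_def g_def u_def w_def \<mu>_def\<close>)
  moreover have "dtU dt (U(n := V)) n = (\<lambda>i. (V i - u i) / dt)"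
    "dtU dt (U(n := V)) (n - 1) = (\<lambda>i. (u i - U (n - 2) i) / dt)"
    "(U(n := V)) 0 = U 0"
    using n by (auto simp: dtU_def u_def numeral_2_eq_2)
  moreover have "dxxxx J (\<lambda>i. (V i - u i) / dt) j = (dxxxx J V j - dxxxx J u j) / dt"
    if "j \<in> {1..J-1}" for j
    unfolding dxxxx_eq_sum[OF that]
    by (simp add: sum_divide_distrib[symmetric] sum_subtractf[symmetric] algebra_simps)
  moreover have "(\<Sum>p = 1..n. wts \<beta> dt n p * dxxxx J (dtU dt (U(n := V)) p) j)
      = (\<Sum>p = 1..n - 1. wts \<beta> dt n p * dxxxx J (dtU dt U p) j)
        + w * dxxxx J (\<lambda>i. (V i - u i) / dt) j" for j
    using sum_wts_dtU_update[of n \<beta> dt J U V j] n by (simp add: u_def w_def)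
  moreover have "G ((dnorm J (dxx J V))^2) = dt * g"
    using dt by (simp add: g_def)
  ultimately show ?thesis
    unfolding FD_level_def using n dt by (simp add: \<mu>_def)
qed

lemma FD_level_solvable:
  assumes S1: "assm_S1 G" and kernel: "kernel_K1 \<beta> \<or> kernel_K2 \<beta>" and K0: "Kker \<beta> 0 < 1"
    and dt: "dt > 0" and n: "n \<ge> 2"
  shows "\<exists>V. FD_level G \<beta> f J dt (U(n := V)) n"
proof -
  let ?I = "{1..J-1}"
  define \<Gamma> where "\<Gamma> s = G (meshh J * s) / dt" for s
  have G_cont: "continuous_on {0..} G" and G_pos: "\<And>v. v \<ge> 0 \<Longrightarrow> G v > 0"
    using S1 by (simp_all add: assm_S1_def)
  have mesh_nonneg: "meshh J * s \<ge> 0" if "s \<ge> 0" for s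
    using that by (simp add: meshh_def)
  have "continuous_on {0..} (\<lambda>s. G (meshh J * s))"
    using mesh_nonneg by (intro continuous_on_compose2[OF G_cont] continuous_intros) auto
  then have \<Gamma>_cont: "continuous_on {0..} \<Gamma>"
    unfolding \<Gamma>_def using dt by (intro continuous_intros) auto
  have \<Gamma>_nonneg: "\<Gamma> s \<ge> 0" if "s \<ge> 0" for s
    using G_pos[OF mesh_nonneg[OF that]] dt by (simp add: \<Gamma>_def)
  have c_nonneg: "1 - Kker \<beta> 0 + wts \<beta> dt n n / dt \<ge> 0"
    using wts_diag_ge[OF kernel K0 dt, of n] n dt by (simp add: field_simps)
  have "1 / dt^2 > 0"
    using dt by simp
  moreover have "\<forall>x. qform ?I (dxxxx_mat J) x \<ge> 0"
    using qform_dxxxx_mat_nonneg by blast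
  ultimately obtain V where "\<forall>j\<in>?I.
      (1 / dt^2 + \<Gamma> (\<Sum>i\<in>?I. (\<Sum>k\<in>?I. dxx_mat J i k * V k)^2)) * V j
      + (1 - Kker \<beta> 0 + wts \<beta> dt n n / dt) * (\<Sum>k\<in>?I. dxxxx_mat J j k * V k)
      = FD_known \<beta> f J dt U n j + \<Gamma> (\<Sum>i\<in>?I. (\<Sum>k\<in>?I. dxx_mat J i k * V k)^2) * U (n - 1) j"
    using nonlinear_psd_system_solvable[OF finite_atLeastAtMost _ c_nonneg _ \<Gamma>_cont \<Gamma>_nonneg,
        where B = "dxx_mat J" and R = "FD_known \<beta> f J dt U n" and u = "U (n - 1)"]
    by blast
  then have "FD_level G \<beta> f J dt (U(n := V)) n"
    using dt n by (intro FD_level_updateI) (simp_all add: \<Gamma>_def dnorm_dxx_sq dxxxx_eq_sum)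
  then show ?thesis
    by blast
qed

lemma FD_level_cong:
  assumes "\<And>i. i \<le> n \<Longrightarrow> U i = U' i"
  shows "FD_level G \<beta> f J dt U n = FD_level G \<beta> f J dt U' n"
proof -
  have "dtU dt U p = dtU dt U' p" if "p \<le> n" for p
    using assms that by (simp add: dtU_def)
  then have "(\<Sum>p = 1..n. wts \<beta> dt n p * dxxxx J (dtU dt U p) j)
      = (\<Sum>p = 1..n. wts \<beta> dt n p * dxxxx J (dtU dt U' p) j)" for j
    by (intro sum.cong) auto
  then show ?thesis
    unfolding FD_level_def by (simp add: dtU_def assms)
qed

primrec levels :: "((nat \<Rightarrow> 'a) \<Rightarrow> nat \<Rightarrow> 'a) \<Rightarrow> (nat \<Rightarrow> 'a) \<Rightarrow> nat \<Rightarrow> nat \<Rightarrow> 'a" where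
  "levels sol H 0 = H"
| "levels sol H (Suc k) = (levels sol H k)(k + 2 := sol (levels sol H k) (k + 2))"

lemma levels_stable:
  assumes "i \<le> k + 1"
  shows "levels sol H (k + d) i = levels sol H k i"
  using assms by (induction d) auto

lemma causal_sequence_exists:
  fixes P :: "(nat \<Rightarrow> 'a) \<Rightarrow> nat \<Rightarrow> bool"
  assumes causal: "\<And>U U' n. (\<And>i. i \<le> n \<Longrightarrow> U i = U' i) \<Longrightarrow> P U n = P U' n"
    and step: "\<And>U n. n \<ge> 2 \<Longrightarrow> \<exists>V. P (U(n := V)) n"
  shows "\<exists>U. U 0 = x0 \<and> U 1 = x1 \<and> (\<forall>n\<ge>2. P U n)"
proof -
  define sol where "sol U n = (SOME V. P (U(n := V)) n)" for U n
  have sol: "P (U(n := sol U n)) n" if "n \<ge> 2" for U n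
    unfolding sol_def using step[OF that] by (rule someI_ex)
  define H where "H = levels sol (\<lambda>i. if i = 0 then x0 else x1)"
  define U where "U i = H i i" for i
  have "P U n" if "n \<ge> 2" for n
  proof -
    define k where "k = n - 2"
    have k: "n = k + 2"
      using that by (simp add: k_def)
    have agree: "U i = H (k + 1) i" if "i \<le> n" for i
    proof (cases "i = n")
      case True
      then show ?thesis
        using levels_stable[of n "k + 1" sol _ 1] k by (simp add: U_def H_def)
    next
      case False
      then show ?thesis
        using levels_stable[of i i sol _ "k + 1 - i"] k that by (simp add: U_def H_def)
    qed
    have "P (H (k + 1)) n"
      using sol[of n "H k"] that k by (simp add: H_def)
    moreover have "P U n = P (H (k + 1)) n"
      using agree by (rule causal)
    ultimately show ?thesis
      by simp
  qed
  moreover have "U 0 = x0" "U 1 = x1"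
    using levels_stable[of 1 0 sol _ 1] by (simp_all add: U_def H_def)
  ultimately show ?thesis
    by blast
qed

theorem theorem3p2:
  fixes G \<beta> :: "real \<Rightarrow> real"
    and f :: "real \<Rightarrow> real \<Rightarrow> real"
    and J :: nat and dt :: real and N :: enat
    and U0 U1 :: "nat \<Rightarrow> real"
  assumes S1: "assm_S1 G"
    and kernel: "kernel_K1 \<beta> \<or> kernel_K2 \<beta>"
    and K0: "Kker \<beta> 0 < 1"
    and J: "J \<ge> 1"
    and dt: "dt > 0"
  shows "(\<forall>n \<ge> 2. \<forall>U :: nat \<Rightarrow> nat \<Rightarrow> real. \<exists>V :: nat \<Rightarrow> real.
            FD_level G \<beta> f J dt (U(n := V)) n)
         \<and> (\<exists>U :: nat \<Rightarrow> nat \<Rightarrow> real.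
              (\<forall>j \<in> {1..J - 1}. U 0 j = U0 j \<and> U 1 j = U1 j) \<and>
              (\<forall>n. 2 \<le> n \<and> enat n \<le> N \<longrightarrow> FD_level G \<beta> f J dt U n))"
proof
  show "\<forall>n \<ge> 2. \<forall>U. \<exists>V. FD_level G \<beta> f J dt (U(n := V)) n"
    using FD_level_solvable[OF S1 kernel K0 dt] by blast
  obtain U where "U 0 = U0" "U 1 = U1" "\<forall>n\<ge>2. FD_level G \<beta> f J dt U n"
    using causal_sequence_exists[where P = "FD_level G \<beta> f J dt",
        OF FD_level_cong FD_level_solvable[OF S1 kernel K0 dt]]
    by blast
  then show "\<exists>U. (\<forall>j \<in> {1..J - 1}. U 0 j = U0 j \<and> U 1 j = U1 j) \<and>
      (\<forall>n. 2 \<le> n \<and> enat n \<le> N \<longrightarrow> FD_level G \<beta> f J dt U n)"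
    by blast
qed

end
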